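(* Let $\mathcal X$ be a set of $n$ entities, each moving along a trajectory of $\tau$ edges, in general position. For every $\varepsilon\ge 0$, $m\ge 1$, and $\delta\ge 0$, the number of maximal groups is $O(\tau n^3)$. This bound is tight in the worst case: there are inputs with $\Omega(\tau n^3)$ maximal groups.
   Context: Let $\mathcal X$ be a set of $n$ entities. All trajectories are sampled at common times $t_0<t_1<\dots<t_\tau$; each entity $x$ has a position $x(t_i)\in\mathbb R^2$ at each $t_i$ and moves with constant velocity between consecutive sample times, so its trajectory is a polygonal path with $\tau$ edges defined on $[t_0,t_\tau]$. Fix $\varepsilon\ge 0$. Two entities $x,y$ are directly connected at time $t$ if $\|x(t)-y(t)\|\le 2\varepsilon$ (their $\varepsilon$-discs intersect). They are $\varepsilon$-connected at time $t$ if there is a sequence $x=x_0,\dots,x_k=y$ with $x_i,x_{i+1}$ directly connected at $t$. A component at time $t$ is a maximal set of pairwise $\varepsilon$-connected entities; the set $\mathcal C(t)$ of components partitions $\mathcal X$. General position: no two distinct events at which a pair of entities becomes directly connected or directly disconnected occur at the same time. Given a size parameter $m\ge 1$ and duration parameter $\delta\ge 0$, a set $G\subseteq\mathcal X$ is a group during a closed interval $I\subseteq[t_0,t_\tau]$ if $|G|\ge m$, $I$ has length at least $\delta$, and for every $t\in I$ there is $C\in\mathcal C(t)$ with $G\subseteq C$. A group $H$ during $I_H$ covers a group $G$ during $I_G$ if $G\subseteq H$ and $I_G\subseteq I_H$; a group is maximal if no other group covers it. Maximal groups are counted as distinct pairs $(G,I_G)$. *)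

theory Defs
  imports "HOL-Analysis.Analysis"
begin

text \<open>Entities are natural numbers (a finite set X of them).  Sample times are
  T 0 < T 1 < ... < T tau.  P x i is the position of entity x at time T i.\<close>

type_synonym point = "real^2"

definition valid_times :: "(nat \<Rightarrow> real) \<Rightarrow> nat \<Rightarrow> bool" where
  "valid_times T tau \<longleftrightarrow> (\<forall>i<tau. T i < T (Suc i))"

text \<open>Piecewise-linear interpolation of the samples Q 0, ..., Q tau
  (constant value extension outside [T 0, T tau], which is never used).\<close>
definition traj :: "(nat \<Rightarrow> real) \<Rightarrow> nat \<Rightarrow> (nat \<Rightarrow> point) \<Rightarrow> real \<Rightarrow> point" where
  "traj T tau Q t =
     (if t \<le> T 0 then Q 0
      else if T tau \<le> t then Q tau
      else (let i = (LEAST i. t \<le> T (Suc i))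
            in Q i + ((t - T i) / (T (Suc i) - T i)) *\<^sub>R (Q (Suc i) - Q i)))"

definition dconn :: "real \<Rightarrow> (nat \<Rightarrow> real) \<Rightarrow> nat \<Rightarrow> (nat \<Rightarrow> nat \<Rightarrow> point)
    \<Rightarrow> nat \<Rightarrow> nat \<Rightarrow> real \<Rightarrow> bool" where
  "dconn eps T tau P x y t \<longleftrightarrow> dist (traj T tau (P x) t) (traj T tau (P y) t) \<le> 2 * eps"

definition eps_conn :: "nat set \<Rightarrow> real \<Rightarrow> (nat \<Rightarrow> real) \<Rightarrow> nat \<Rightarrow> (nat \<Rightarrow> nat \<Rightarrow> point)
    \<Rightarrow> nat \<Rightarrow> nat \<Rightarrow> real \<Rightarrow> bool" where
  "eps_conn X eps T tau P x y t \<longleftrightarrow> x \<in> X \<and> y \<in> X \<and>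
     (\<lambda>u v. u \<in> X \<and> v \<in> X \<and> dconn eps T tau P u v t)\<^sup>*\<^sup>* x y"

definition components :: "nat set \<Rightarrow> real \<Rightarrow> (nat \<Rightarrow> real) \<Rightarrow> nat \<Rightarrow> (nat \<Rightarrow> nat \<Rightarrow> point)
    \<Rightarrow> real \<Rightarrow> nat set set" where
  "components X eps T tau P t = {{y \<in> X. eps_conn X eps T tau P x y t} | x. x \<in> X}"

definition is_group :: "nat set \<Rightarrow> real \<Rightarrow> (nat \<Rightarrow> real) \<Rightarrow> nat \<Rightarrow> (nat \<Rightarrow> nat \<Rightarrow> point)
    \<Rightarrow> nat \<Rightarrow> real \<Rightarrow> nat set \<Rightarrow> real set \<Rightarrow> bool" where
  "is_group X eps T tau P m delta G I \<longleftrightarrow>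
     G \<subseteq> X \<and> card G \<ge> m \<and>
     (\<exists>a b. I = {a..b} \<and> a \<le> b \<and> T 0 \<le> a \<and> b \<le> T tau \<and> b - a \<ge> delta) \<and>
     (\<forall>t\<in>I. \<exists>C\<in>components X eps T tau P t. G \<subseteq> C)"

definition maximal_groups :: "nat set \<Rightarrow> real \<Rightarrow> (nat \<Rightarrow> real) \<Rightarrow> nat \<Rightarrow> (nat \<Rightarrow> nat \<Rightarrow> point)
    \<Rightarrow> nat \<Rightarrow> real \<Rightarrow> (nat set \<times> real set) set" where
  "maximal_groups X eps T tau P m delta =
     {(G, I). is_group X eps T tau P m delta G I \<and>
        \<not> (\<exists>H J. is_group X eps T tau P m delta H J \<and> (H, J) \<noteq> (G, I) \<and> G \<subseteq> H \<and> I \<subseteq> J)}"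

definition becomes_conn :: "real \<Rightarrow> (nat \<Rightarrow> real) \<Rightarrow> nat \<Rightarrow> (nat \<Rightarrow> nat \<Rightarrow> point)
    \<Rightarrow> nat \<Rightarrow> nat \<Rightarrow> real \<Rightarrow> bool" where
  "becomes_conn eps T tau P x y t \<longleftrightarrow> T 0 < t \<and> t < T tau \<and> dconn eps T tau P x y t \<and>
     (\<forall>e>0. \<exists>s. t - e < s \<and> s < t \<and> \<not> dconn eps T tau P x y s)"

definition becomes_disc :: "real \<Rightarrow> (nat \<Rightarrow> real) \<Rightarrow> nat \<Rightarrow> (nat \<Rightarrow> nat \<Rightarrow> point)
    \<Rightarrow> nat \<Rightarrow> nat \<Rightarrow> real \<Rightarrow> bool" where
  "becomes_disc eps T tau P x y t \<longleftrightarrow> T 0 < t \<and> t < T tau \<and> dconn eps T tau P x y t \<and>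
     (\<forall>e>0. \<exists>s. t < s \<and> s < t + e \<and> \<not> dconn eps T tau P x y s)"

definition event :: "bool \<Rightarrow> real \<Rightarrow> (nat \<Rightarrow> real) \<Rightarrow> nat \<Rightarrow> (nat \<Rightarrow> nat \<Rightarrow> point)
    \<Rightarrow> nat \<Rightarrow> nat \<Rightarrow> real \<Rightarrow> bool" where
  "event k eps T tau P x y t \<longleftrightarrow>
     (if k then becomes_conn eps T tau P x y t else becomes_disc eps T tau P x y t)"

definition general_position :: "nat set \<Rightarrow> real \<Rightarrow> (nat \<Rightarrow> real) \<Rightarrow> nat
    \<Rightarrow> (nat \<Rightarrow> nat \<Rightarrow> point) \<Rightarrow> bool" where
  "general_position X eps T tau P \<longleftrightarrow>
     (\<forall>k k' x y x' y' t. x \<in> X \<longrightarrow> y \<in> X \<longrightarrow> x' \<in> X \<longrightarrow> y' \<in> X \<longrightarrow> x \<noteq> y \<longrightarrow> x' \<noteq> y' \<longrightarrow>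
        event k eps T tau P x y t \<longrightarrow> event k' eps T tau P x' y' t \<longrightarrow>
        k = k' \<and> {x, y} = {x', y'})"

end

theory Submission
  imports Defs
begin

text \<open>
  Upper bound: a maximal group starts at \<open>T 0\<close>, at \<open>T tau\<close>, or at a moment when some pair
  becomes directly connected, for otherwise the finitely many direct connections present at its
  start would persist slightly earlier and the group could be extended to the left. Along one edge
  the distance of two entities is a convex function of time, so each pair becomes connected at most
  once per edge, leaving at most \<open>n\<^sup>2 tau + 2\<close> start times. A maximal group is determined by its
  start time and its entities, and the entity sets of maximal groups with a common start are nested
  or disjoint, so they form a laminar family of at most \<open>2 n\<close> sets.

  Lower bound: \<open>4u\<close> teeth (\<open>u = n div 8\<close>) standing \<open>13\<close> apart form a fixed chain, and \<open>2u\<close> movers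
  below it sweep along the whole comb during every edge, each touching one tooth at a time. The
  movers are spaced slightly more than \<open>13\<close> apart, so the contact windows of the movers \<open>l\<close> with
  their teeth \<open>r - l\<close> on a diagonal \<open>r\<close> are shifted by tiny amounts against each other. For every
  even edge, diagonal and interval \<open>[i..j]\<close> of movers, the teeth together with the movers \<open>i..j\<close>
  then form a maximal group during the intersection of their windows, which gives \<open>\<Omega>(tau n\<^sup>3)\<close>
  maximal groups; all events happen at distinct times, so the configuration is in general position.
\<close>

section \<open>Sample times, trajectories and components\<close>

lemma valid_times_less:
  assumes "valid_times T tau" "i < j" "j \<le> tau"
  shows "T i < T j"
  using assms(2,3)
proof (induction j)
  case (Suc j)
  have "T j < T (Suc j)" using assms(1) Suc.prems unfolding valid_times_def by auto
  then show ?case using Suc by (cases "i = j") auto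
qed simp

lemma valid_times_le: "valid_times T tau \<Longrightarrow> i \<le> j \<Longrightarrow> j \<le> tau \<Longrightarrow> T i \<le> T j"
  using valid_times_less[of T tau i j] by (cases "i = j") auto

lemma least_edge_index:
  assumes "valid_times T tau" "i < tau" "T i < t" "t \<le> T (Suc i)"
  shows "(LEAST j. t \<le> T (Suc j)) = i"
proof (rule Least_equality)
  fix j assume "t \<le> T (Suc j)"
  then show "i \<le> j"
    using assms valid_times_le[of T tau "Suc j" i] by (cases "i \<le> j") auto
qed (use assms in simp)

lemma traj_interior:
  assumes vt: "valid_times T tau" and i: "i < tau" and t: "T i < t" "t \<le> T (Suc i)" "t < T tau"
  shows "traj T tau Q t = Q i + ((t - T i) / (T (Suc i) - T i)) *\<^sub>R (Q (Suc i) - Q i)"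
proof -
  have "T 0 < t" using valid_times_le[OF vt, of 0 i] i t by simp
  then show ?thesis using t least_edge_index[OF vt i t(1,2)] by (simp add: traj_def Let_def)
qed

lemma traj_on_edge:
  assumes vt: "valid_times T tau" and e: "e < tau" and t: "T e \<le> t" "t \<le> T (Suc e)"
  shows "traj T tau Q t = Q e + ((t - T e) / (T (Suc e) - T e)) *\<^sub>R (Q (Suc e) - Q e)"
proof -
  have edge_pos: "T e < T (Suc e)" using vt e unfolding valid_times_def by auto
  have end_le: "T (Suc e) \<le> T tau" using valid_times_le[OF vt, of "Suc e" tau] e by simp
  consider "t = T e" "e = 0" | d where "t = T e" "e = Suc d" | "T e < t" "t < T tau"
    | "T e < t" "t = T tau"
    using t end_le by (cases e) fastforce+
  then show ?thesis
  proof cases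
    case (2 d)
    have "T d < t" using vt 2 e unfolding valid_times_def by auto
    moreover have "t < T tau" using 2 edge_pos end_le by simp
    ultimately show ?thesis
      using traj_interior[OF vt, of d t Q] 2 e by (simp add: valid_times_def)
  next
    case 4
    then have "Suc e = tau"
      using t end_le valid_times_less[OF vt, of "Suc e" tau] e by (cases "Suc e = tau") auto
    moreover have "T 0 \<le> T e" using valid_times_le[OF vt, of 0 e] e by simp
    ultimately show ?thesis using 4 edge_pos by (simp add: traj_def)
  qed (use traj_interior[OF vt e] t in \<open>auto simp: traj_def\<close>)
qed

lemma traj_constant: "(\<And>i. Q i = c) \<Longrightarrow> traj T tau Q t = c"
  by (simp add: traj_def Let_def)

lemma edge_containing:
  assumes vt: "valid_times T tau" and t: "T 0 < t" "t \<le> T tau"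
  shows "\<exists>i<tau. T i < t \<and> t \<le> T (Suc i)"
proof -
  have tau: "tau \<noteq> 0" using t by (cases tau) auto
  define i where "i = (LEAST i. t \<le> T (Suc i))"
  have ex: "t \<le> T (Suc (tau - 1))" using t tau by simp
  have "t \<le> T (Suc i)" unfolding i_def by (rule LeastI[of "\<lambda>i. t \<le> T (Suc i)", OF ex])
  moreover have "i \<le> tau - 1" unfolding i_def by (rule Least_le[of "\<lambda>i. t \<le> T (Suc i)", OF ex])
  moreover have "T i < t"
  proof (cases i)
    case (Suc j)
    then show ?thesis using not_less_Least[of j "\<lambda>i. t \<le> T (Suc i)"] i_def by simp
  qed (use t in simp)
  ultimately show ?thesis using tau by (intro exI[of _ i]) auto
qed

lemma dconn_commute: "dconn eps T tau P x y t = dconn eps T tau P y x t"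
  by (simp add: dconn_def dist_commute)

lemma eps_conn_sym:
  assumes "eps_conn X eps T tau P x y t"
  shows "eps_conn X eps T tau P y x t"
proof -
  let ?R = "\<lambda>u v. u \<in> X \<and> v \<in> X \<and> dconn eps T tau P u v t"
  have "?R\<^sup>*\<^sup>* x y" using assms by (simp add: eps_conn_def)
  then have "?R\<^sup>*\<^sup>* y x"
  proof (induction rule: rtranclp_induct)
    case (step y z)
    then have "?R z y" by (simp add: dconn_commute)
    then show ?case using step.IH by (rule converse_rtranclp_into_rtranclp)
  qed simp
  then show ?thesis using assms by (simp add: eps_conn_def)
qed

lemma eps_conn_trans:
  "eps_conn X eps T tau P x y t \<Longrightarrow> eps_conn X eps T tau P y z t \<Longrightarrow> eps_conn X eps T tau P x z t"
  unfolding eps_conn_def by (meson rtranclp_trans)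

lemma eps_conn_mono:
  assumes "eps_conn X eps T tau P x y t"
    and "\<And>u v. u \<in> X \<Longrightarrow> v \<in> X \<Longrightarrow> dconn eps T tau P u v t \<Longrightarrow> dconn eps T tau P u v s"
  shows "eps_conn X eps T tau P x y s"
  using assms mono_rtranclp[of "\<lambda>u v. u \<in> X \<and> v \<in> X \<and> dconn eps T tau P u v t"
      "\<lambda>u v. u \<in> X \<and> v \<in> X \<and> dconn eps T tau P u v s"]
  unfolding eps_conn_def by blast

lemma component_in_components:
  "x \<in> X \<Longrightarrow> {y \<in> X. eps_conn X eps T tau P x y t} \<in> components X eps T tau P t"
  unfolding components_def by blast

lemma eps_conn_in_component:
  assumes "C \<in> components X eps T tau P t" "x \<in> C" "y \<in> C"
  shows "eps_conn X eps T tau P x y t"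
proof -
  obtain z where "z \<in> X" "C = {y \<in> X. eps_conn X eps T tau P z y t}"
    using assms(1) by (auto simp: components_def)
  then show ?thesis using assms eps_conn_sym eps_conn_trans by blast
qed

lemma components_eqI:
  assumes "C \<in> components X eps T tau P t" "C' \<in> components X eps T tau P t" "x \<in> C" "x \<in> C'"
  shows "C = C'"
proof -
  obtain z where z: "C = {y \<in> X. eps_conn X eps T tau P z y t}"
    using assms(1) by (auto simp: components_def)
  obtain z' where z': "C' = {y \<in> X. eps_conn X eps T tau P z' y t}"
    using assms(2) by (auto simp: components_def)
  have "eps_conn X eps T tau P z x t" "eps_conn X eps T tau P z' x t"
    using assms(3,4) z z' by auto
  then have "eps_conn X eps T tau P z z' t" using eps_conn_sym eps_conn_trans by blast
  then have "eps_conn X eps T tau P z y t = eps_conn X eps T tau P z' y t" for y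
    using eps_conn_sym eps_conn_trans by blast
  then show ?thesis using z z' by auto
qed

lemma in_one_componentI:
  assumes "x \<in> G" "G \<subseteq> X" "\<And>y. y \<in> G \<Longrightarrow> eps_conn X eps T tau P x y t"
  shows "\<exists>C\<in>components X eps T tau P t. G \<subseteq> C"
proof
  show "{y \<in> X. eps_conn X eps T tau P x y t} \<in> components X eps T tau P t"
    using assms(1,2) by (intro component_in_components) auto
qed (use assms in auto)

lemma in_one_component_mono:
  assumes "C \<in> components X eps T tau P t" "G \<subseteq> C" "G \<noteq> {}"
    and "\<And>u v. u \<in> X \<Longrightarrow> v \<in> X \<Longrightarrow> dconn eps T tau P u v t \<Longrightarrow> dconn eps T tau P u v s"
  shows "\<exists>C\<in>components X eps T tau P s. G \<subseteq> C"
proof -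
  obtain x where x: "x \<in> G" using assms(3) by blast
  have "C \<subseteq> X" using assms(1) by (auto simp: components_def)
  moreover have "eps_conn X eps T tau P x y s" if "y \<in> G" for y
    using eps_conn_mono[OF eps_conn_in_component[OF assms(1)]] assms(2,4) x that by blast
  ultimately show ?thesis using assms(2) by (intro in_one_componentI[OF x]) auto
qed

lemma isolated_component:
  assumes iso: "\<And>y. y \<in> X \<Longrightarrow> y \<noteq> x \<Longrightarrow> \<not> dconn eps T tau P x y t"
    and "C \<in> components X eps T tau P t" "x \<in> C" "z \<in> C"
  shows "z = x"
proof -
  have "(\<lambda>u v. u \<in> X \<and> v \<in> X \<and> dconn eps T tau P u v t)\<^sup>*\<^sup>* x z"
    using eps_conn_in_component[OF assms(2-4)] by (simp add: eps_conn_def)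
  then show ?thesis
  proof (induction rule: rtranclp_induct)
    case (step y z)
    then show ?case using iso[of z] by blast
  qed simp
qed

section \<open>At most $O(\tau n^3)$ maximal groups\<close>

lemma frequently_at_left_real_iff:
  "(\<exists>\<^sub>F s in at_left t. P s) \<longleftrightarrow> (\<forall>e>0. \<exists>s. t - e < s \<and> s < t \<and> P s)" for t :: real
proof -
  have "(\<exists>b<t. \<forall>s>b. s < t \<longrightarrow> \<not> P s) \<longleftrightarrow> (\<exists>e>0. \<forall>s. t - e < s \<longrightarrow> s < t \<longrightarrow> \<not> P s)"
  proof
    assume "\<exists>b<t. \<forall>s>b. s < t \<longrightarrow> \<not> P s"
    then obtain b where "b < t" "\<forall>s>b. s < t \<longrightarrow> \<not> P s" by blast
    then show "\<exists>e>0. \<forall>s. t - e < s \<longrightarrow> s < t \<longrightarrow> \<not> P s" by (intro exI[of _ "t - b"]) auto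
  next
    assume "\<exists>e>0. \<forall>s. t - e < s \<longrightarrow> s < t \<longrightarrow> \<not> P s"
    then obtain e where "e > 0" "\<forall>s. t - e < s \<longrightarrow> s < t \<longrightarrow> \<not> P s" by blast
    then show "\<exists>b<t. \<forall>s>b. s < t \<longrightarrow> \<not> P s" by (intro exI[of _ "t - e"]) auto
  qed
  then show ?thesis unfolding frequently_def eventually_at_left_field by blast
qed

lemma becomes_conn_iff:
  "becomes_conn eps T tau P x y t \<longleftrightarrow> T 0 < t \<and> t < T tau \<and> dconn eps T tau P x y t \<and>
     (\<exists>\<^sub>F s in at_left t. \<not> dconn eps T tau P x y s)"
  by (simp add: becomes_conn_def frequently_at_left_real_iff)

lemma eventD:
  assumes "event k eps T tau P x y t"
  shows "T 0 < t" "t < T tau" "dconn eps T tau P x y t"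
    and "d > 0 \<Longrightarrow> \<exists>s. \<not> dconn eps T tau P x y s \<and> (if k then t - d < s \<and> s < t else t < s \<and> s < t + d)"
  using assms unfolding event_def becomes_conn_def becomes_disc_def by (cases k; auto)+

lemma event_commute: "event k eps T tau P x y t = event k eps T tau P y x t"
  by (simp add: event_def becomes_conn_def becomes_disc_def dconn_commute)

lemma dconn_convex_on_edge:
  assumes vt: "valid_times T tau" and i: "i < tau"
    and t: "T i \<le> t1" "t1 \<le> s" "s \<le> t2" "t2 \<le> T (Suc i)"
    and d: "dconn eps T tau P x y t1" "dconn eps T tau P x y t2"
  shows "dconn eps T tau P x y s"
proof (cases "t1 = t2")
  case False
  then have lt: "t1 < t2" using t by simp
  define D where "D = T (Suc i) - T i"
  define A where "A = P x i - P y i"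
  define B where "B = (P x (Suc i) - P x i) - (P y (Suc i) - P y i)"
  define f where "f t = traj T tau (P x) t - traj T tau (P y) t" for t
  have f_affine: "f t = A + ((t - T i) / D) *\<^sub>R B" if "T i \<le> t" "t \<le> T (Suc i)" for t
    using that unfolding f_def A_def B_def D_def by (simp add: traj_on_edge[OF vt i] algebra_simps)
  define l where "l = (s - t1) / (t2 - t1)"
  have l: "0 \<le> l" "l \<le> 1" using t lt by (auto simp: l_def field_simps)
  have "l * (t2 - t1) = s - t1" using lt by (simp add: l_def)
  then have "s = (1 - l) * t1 + l * t2" by (simp add: algebra_simps)
  then have "s - T i = (1 - l) * (t1 - T i) + l * (t2 - T i)" by (simp add: algebra_simps)
  then have "(s - T i) / D = (1 - l) * ((t1 - T i) / D) + l * ((t2 - T i) / D)"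
    by (simp add: add_divide_distrib)
  then have "f s = (1 - l) *\<^sub>R f t1 + l *\<^sub>R f t2"
    using f_affine[of s] f_affine[of t1] f_affine[of t2] t by (simp add: algebra_simps)
  then have "norm (f s) \<le> (1 - l) * norm (f t1) + l * norm (f t2)"
    using norm_triangle_ineq[of "(1 - l) *\<^sub>R f t1" "l *\<^sub>R f t2"] l by simp
  also have "\<dots> \<le> (1 - l) * (2 * eps) + l * (2 * eps)"
    using d l unfolding dconn_def dist_norm f_def by (intro add_mono mult_left_mono) auto
  finally show ?thesis unfolding dconn_def dist_norm f_def by (simp add: algebra_simps)
qed (use t d in simp)

text \<open>Between two such events on one edge the pair would stay directly connected, by convexity.\<close>

lemma becomes_conn_finite_card:
  assumes vt: "valid_times T tau"
  shows "finite {t. becomes_conn eps T tau P x y t} \<and> card {t. becomes_conn eps T tau P x y t} \<le> tau"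
proof -
  let ?E = "{t. becomes_conn eps T tau P x y t}"
  define edge where "edge t = (SOME i. i < tau \<and> T i < t \<and> t \<le> T (Suc i))" for t
  have edge: "edge t < tau \<and> T (edge t) < t \<and> t \<le> T (Suc (edge t))" if "t \<in> ?E" for t
  proof -
    have "T 0 < t" "t \<le> T tau" using that by (auto simp: becomes_conn_def)
    from edge_containing[OF vt this] show ?thesis unfolding edge_def by (rule someI_ex)
  qed
  have not_same_edge: "edge t1 \<noteq> edge t2" if "t1 \<in> ?E" "t2 \<in> ?E" "t1 < t2" for t1 t2
  proof
    assume same: "edge t1 = edge t2"
    have "\<forall>\<^sub>F s in at_left t2. dconn eps T tau P x y s"
      unfolding eventually_at_left_field
    proof (intro exI[of _ t1] conjI allI impI)
      fix s assume "t1 < s" "s < t2"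
      then show "dconn eps T tau P x y s"
        using edge[OF that(1)] edge[OF that(2)] that same
        by (intro dconn_convex_on_edge[OF vt, of "edge t1" t1 s t2]) (auto simp: becomes_conn_def)
    qed (use that in simp)
    then show False using that(2) by (simp add: becomes_conn_iff frequently_def)
  qed
  have inj: "inj_on edge ?E"
  proof (rule inj_onI)
    fix t1 t2 assume "t1 \<in> ?E" "t2 \<in> ?E" "edge t1 = edge t2"
    then show "t1 = t2" using not_same_edge[of t1 t2] not_same_edge[of t2 t1]
      by (cases t1 t2 rule: linorder_cases) auto
  qed
  have sub: "edge ` ?E \<subseteq> {..<tau}" using edge by auto
  show ?thesis
    using finite_imageD[OF finite_subset[OF sub] inj] card_inj_on_le[OF inj sub] by simp
qed

definition laminar :: "'a set set \<Rightarrow> bool" where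
  "laminar F \<longleftrightarrow> (\<forall>A\<in>F. \<forall>B\<in>F. A \<inter> B \<noteq> {} \<longrightarrow> A \<subseteq> B \<or> B \<subseteq> A)"

lemma laminarD: "laminar F \<Longrightarrow> A \<in> F \<Longrightarrow> B \<in> F \<Longrightarrow> A \<inter> B \<noteq> {} \<Longrightarrow> A \<subseteq> B \<or> B \<subseteq> A"
  unfolding laminar_def by blast

lemma laminar_punctured_unique:
  assumes lam: "laminar F" and ne: "{} \<notin> F" and U: "U1 \<in> F" "U2 \<in> F" "x \<notin> U1" "x \<notin> U2"
    and S: "insert x U1 \<in> F" "insert x U2 \<in> F"
  shows "U1 = U2"
proof -
  have nested: "V2 \<subseteq> V1"
    if V: "insert x V1 \<subseteq> insert x V2" "V1 \<in> F" "V2 \<in> F" "x \<notin> V1" "x \<notin> V2" "insert x V1 \<in> F"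
    for V1 V2
  proof -
    have "V1 \<noteq> {}" "V1 \<subseteq> V2" using ne V by auto
    then have "V2 \<inter> insert x V1 \<noteq> {}" by blast
    then have "V2 \<subseteq> insert x V1 \<or> insert x V1 \<subseteq> V2" using laminarD[OF lam V(3,6)] by simp
    then show ?thesis using V(5) by blast
  qed
  have "insert x U1 \<inter> insert x U2 \<noteq> {}" by simp
  then have "insert x U1 \<subseteq> insert x U2 \<or> insert x U2 \<subseteq> insert x U1"
    using laminarD[OF lam S] by simp
  then show ?thesis using nested[of U1 U2] nested[of U2 U1] U S by blast
qed

text \<open>Removing a point \<open>x\<close> maps the members containing \<open>x\<close>, other than \<open>{x}\<close>, injectively into a
  laminar family over one point fewer, where they meet at most one member avoiding \<open>x\<close>.\<close>

lemma card_laminar_le: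
  assumes "finite X" "F \<subseteq> Pow X" "{} \<notin> F" "laminar F"
  shows "card F \<le> 2 * card X"
  using assms
proof (induction X arbitrary: F rule: finite_induct)
  case empty
  then have "F = {}" by auto
  then show ?case by simp
next
  case (insert x A)
  have finF: "finite F" using insert.prems(1) insert.hyps(1) finite_subset[of F] by auto
  define F' where "F' = (\<lambda>S. S - {x}) ` F - {{}}"
  have F': "F' \<subseteq> Pow A" "{} \<notin> F'" "laminar F'"
    using insert.prems(1,3) unfolding F'_def laminar_def by auto blast+
  have finF': "finite F'" using F'(1) insert.hyps(1) finite_subset[of F' "Pow A"] by auto
  define Fx where "Fx = {S \<in> F. x \<in> S \<and> S \<noteq> {x}}"
  define Fn where "Fn = {S \<in> F. x \<notin> S}"
  have finFx: "finite Fx" "finite Fn" using finF unfolding Fx_def Fn_def by auto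
  have "card F \<le> card ({{x}} \<union> Fx \<union> Fn)"
    by (rule card_mono) (use finFx in \<open>auto simp: Fx_def Fn_def\<close>)
  also have "\<dots> \<le> 1 + card Fx + card Fn"
    using card_Un_le[of "{{x}} \<union> Fx" Fn] card_Un_le[of "{{x}}" Fx] by simp
  finally have cardF: "card F \<le> 1 + card Fx + card Fn" .
  have inj: "inj_on (\<lambda>S. S - {x}) Fx"
  proof (rule inj_onI)
    fix S1 S2 assume "S1 \<in> Fx" "S2 \<in> Fx" "S1 - {x} = S2 - {x}"
    then show "S1 = S2" unfolding Fx_def by (metis insert_Diff mem_Collect_eq)
  qed
  have "card ((\<lambda>S. S - {x}) ` Fx \<union> Fn) \<le> card F'"
    using insert.prems(2) by (intro card_mono[OF finF']) (auto simp: Fx_def Fn_def F'_def)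
  moreover have "card ((\<lambda>S. S - {x}) ` Fx \<inter> Fn) \<le> 1"
  proof -
    have "U1 = U2" if "U1 \<in> (\<lambda>S. S - {x}) ` Fx \<inter> Fn" "U2 \<in> (\<lambda>S. S - {x}) ` Fx \<inter> Fn" for U1 U2
      using that insert.prems(2-) unfolding Fx_def Fn_def
      by (intro laminar_punctured_unique[of F U1 U2 x]) (auto simp: insert_absorb)
    then show ?thesis using card_le_Suc0_iff_eq[of "(\<lambda>S. S - {x}) ` Fx \<inter> Fn"] finFx by auto
  qed
  moreover have "card Fx + card Fn
      = card ((\<lambda>S. S - {x}) ` Fx \<union> Fn) + card ((\<lambda>S. S - {x}) ` Fx \<inter> Fn)"
    using card_Un_Int[of "(\<lambda>S. S - {x}) ` Fx" Fn] finFx card_image[OF inj] by simp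
  ultimately show ?case using cardF insert.IH[OF F'] insert.hyps by simp
qed

lemma maximal_groupsD:
  assumes "(G, I) \<in> maximal_groups X eps T tau P m delta"
  shows "is_group X eps T tau P m delta G I"
    and "is_group X eps T tau P m delta H J \<Longrightarrow> G \<subseteq> H \<Longrightarrow> I \<subseteq> J \<Longrightarrow> H = G \<and> J = I"
  using assms unfolding maximal_groups_def by auto

lemma maximal_group_interval:
  assumes "(G, I) \<in> maximal_groups X eps T tau P m delta"
  obtains a b where "I = {a..b}" "a \<le> b" "T 0 \<le> a" "b \<le> T tau" "delta \<le> b - a"
  using assms unfolding maximal_groups_def is_group_def by auto

lemma maximal_group_IccD:
  assumes "(G, {a..b}) \<in> maximal_groups X eps T tau P m delta"
  shows "a \<le> b" "T 0 \<le> a" "b \<le> T tau" "delta \<le> b - a"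
proof -
  obtain a' b' where "{a..b} = {a'..b'}" "a' \<le> b'" "T 0 \<le> a'" "b' \<le> T tau" "delta \<le> b' - a'"
    using assms by (rule maximal_group_interval)
  then show "a \<le> b" "T 0 \<le> a" "b \<le> T tau" "delta \<le> b - a" by (simp_all add: Icc_eq_Icc)
qed

lemma is_group_extend_left:
  assumes grp: "is_group X eps T tau P m delta G {a..b}" and ab: "a \<le> b" and a': "T 0 \<le> a'" "a' \<le> a"
    and together: "\<And>t. a' \<le> t \<Longrightarrow> t < a \<Longrightarrow> \<exists>C\<in>components X eps T tau P t. G \<subseteq> C"
  shows "is_group X eps T tau P m delta G {a'..b}"
proof -
  have "b \<le> T tau" "delta \<le> b - a" using grp ab unfolding is_group_def by auto
  moreover have "\<exists>C\<in>components X eps T tau P t. G \<subseteq> C" if "t \<in> {a'..b}" for t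
    using grp that together[of t] unfolding is_group_def by (cases "a \<le> t") auto
  ultimately show ?thesis using grp ab a' unfolding is_group_def by auto
qed

lemma isolated_not_in_group:
  assumes "is_group X eps T tau P m delta H J" "s \<in> J" "x \<in> H" "z \<in> H" "z \<noteq> x"
    and "\<And>y. y \<in> X \<Longrightarrow> y \<noteq> x \<Longrightarrow> \<not> dconn eps T tau P x y s"
  shows False
proof -
  obtain C where "C \<in> components X eps T tau P s" "H \<subseteq> C"
    using assms(1,2) unfolding is_group_def by blast
  then show False using isolated_component[OF assms(6)] assms(3-5) by blast
qed

lemma maximal_group_frequently_apart_left:
  assumes mg: "(G, {a..b}) \<in> maximal_groups X eps T tau P m delta" and a: "T 0 < a"
  shows "\<exists>\<^sub>F s in at_left a. \<not> (\<exists>C\<in>components X eps T tau P s. G \<subseteq> C)"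
proof (rule ccontr)
  assume "\<not> ?thesis"
  then have "\<forall>\<^sub>F s in at_left a. \<exists>C\<in>components X eps T tau P s. G \<subseteq> C"
    by (simp add: frequently_def)
  then obtain a0 where a0: "a0 < a"
    and together: "\<And>s. a0 < s \<Longrightarrow> s < a \<Longrightarrow> \<exists>C\<in>components X eps T tau P s. G \<subseteq> C"
    unfolding eventually_at_left_field by blast
  define a' where "a' = max (T 0) ((a0 + a) / 2)"
  have a': "T 0 \<le> a'" "a0 < a'" "a' < a" using a a0 unfolding a'_def max_def by auto
  have ab: "a \<le> b" using maximal_group_IccD(1)[OF mg] .
  have "\<exists>C\<in>components X eps T tau P t. G \<subseteq> C" if "a' \<le> t" "t < a" for t
    using together that a'(2) by simp
  then have "is_group X eps T tau P m delta G {a'..b}"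
    by (rule is_group_extend_left[OF maximal_groupsD(1)[OF mg] ab a'(1) less_imp_le[OF a'(3)]])
  moreover have "{a..b} \<subseteq> {a'..b}" using a' by auto
  ultimately have "{a'..b} = {a..b}" using maximal_groupsD(2)[OF mg] by blast
  then show False using a' ab by (simp add: Icc_eq_Icc)
qed

lemma maximal_group_starts_at_event:
  assumes fin: "finite X" and m: "m \<ge> 1"
    and mg: "(G, {a..b}) \<in> maximal_groups X eps T tau P m delta"
  shows "a = T 0 \<or> a = T tau \<or> (\<exists>x\<in>X. \<exists>y\<in>X. becomes_conn eps T tau P x y a)"
proof (rule ccontr)
  assume not_event: "\<not> ?thesis"
  have a: "T 0 < a" "a < T tau" "a \<le> b"
    using maximal_group_IccD[OF mg] not_event by auto
  have grp: "is_group X eps T tau P m delta G {a..b}" using maximal_groupsD(1)[OF mg] .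
  moreover have "a \<in> {a..b}" using a(3) by simp
  ultimately obtain C where C: "C \<in> components X eps T tau P a" "G \<subseteq> C"
    unfolding is_group_def by meson
  have "G \<noteq> {}" using grp m unfolding is_group_def by auto
  define E where "E = {p \<in> X \<times> X. dconn eps T tau P (fst p) (snd p) a}"
  have "\<exists>\<^sub>F s in at_left a. \<exists>p\<in>E. \<not> dconn eps T tau P (fst p) (snd p) s"
    using maximal_group_frequently_apart_left[OF mg a(1)]
  proof (rule frequently_elim1)
    fix s assume "\<not> (\<exists>C\<in>components X eps T tau P s. G \<subseteq> C)"
    then show "\<exists>p\<in>E. \<not> dconn eps T tau P (fst p) (snd p) s"
      using in_one_component_mono[OF C \<open>G \<noteq> {}\<close>, of s] unfolding E_def by auto
  qed
  moreover have "finite E" using fin unfolding E_def by auto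
  ultimately obtain p where "p \<in> E" "\<exists>\<^sub>F s in at_left a. \<not> dconn eps T tau P (fst p) (snd p) s"
    using frequently_bex_finite[of E "\<lambda>s p. \<not> dconn eps T tau P (fst p) (snd p) s" "at_left a"]
    by blast
  then have "fst p \<in> X" "snd p \<in> X" "becomes_conn eps T tau P (fst p) (snd p) a"
    using a unfolding E_def becomes_conn_iff by auto
  then show False using not_event by blast
qed

lemma maximal_groups_same_start_nested:
  assumes fin: "finite X"
    and mg1: "(G1, {a..b1}) \<in> maximal_groups X eps T tau P m delta"
    and mg2: "(G2, {a..b2}) \<in> maximal_groups X eps T tau P m delta"
    and b: "b1 \<le> b2" and meet: "G1 \<inter> G2 \<noteq> {}"
  shows "G2 \<subseteq> G1"
proof -
  have grp1: "is_group X eps T tau P m delta G1 {a..b1}" by (rule maximal_groupsD(1)[OF mg1])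
  have grp2: "is_group X eps T tau P m delta G2 {a..b2}" by (rule maximal_groupsD(1)[OF mg2])
  have "\<exists>C\<in>components X eps T tau P t. G1 \<union> G2 \<subseteq> C" if t: "t \<in> {a..b1}" for t
  proof -
    have "t \<in> {a..b2}" using t b by auto
    then obtain C1 C2 where C: "C1 \<in> components X eps T tau P t" "G1 \<subseteq> C1"
      "C2 \<in> components X eps T tau P t" "G2 \<subseteq> C2"
      using grp1 grp2 t unfolding is_group_def by blast
    obtain x where "x \<in> G1" "x \<in> G2" using meet by blast
    then have "C1 = C2" using C by (intro components_eqI) auto
    then show ?thesis using C by auto
  qed
  moreover have "card G1 \<le> card (G1 \<union> G2)"
    using grp1 grp2 fin unfolding is_group_def by (intro card_mono) (auto intro: finite_subset)
  ultimately have "is_group X eps T tau P m delta (G1 \<union> G2) {a..b1}"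
    using grp1 grp2 unfolding is_group_def by auto
  then show ?thesis using maximal_groupsD(2)[OF mg1] by blast
qed

lemma maximal_groups_same_start_eq:
  assumes mg1: "(G, {a..b1}) \<in> maximal_groups X eps T tau P m delta"
    and mg2: "(G, {a..b2}) \<in> maximal_groups X eps T tau P m delta"
  shows "b1 = b2"
proof -
  have le_case: "b1 = b2" if "(G, {a..b1}) \<in> maximal_groups X eps T tau P m delta"
    "(G, {a..b2}) \<in> maximal_groups X eps T tau P m delta" "b1 \<le> b2" for b1 b2
  proof -
    have "a \<le> b1" using maximal_group_IccD(1)[OF that(1)] .
    moreover have "{a..b2} = {a..b1}"
      using maximal_groupsD(2)[OF that(1) maximal_groupsD(1)[OF that(2)]] that(3) by auto
    ultimately show ?thesis by (simp add: Icc_eq_Icc)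
  qed
  show ?thesis using le_case[OF mg1 mg2] le_case[OF mg2 mg1] by linarith
qed

lemma maximal_groups_common_start_finite_card:
  assumes fin: "finite X" and m: "m \<ge> 1"
  shows "finite {G. \<exists>b. (G, {a..b}) \<in> maximal_groups X eps T tau P m delta}"
    and "card {G. \<exists>b. (G, {a..b}) \<in> maximal_groups X eps T tau P m delta} \<le> 2 * card X"
proof -
  define F where "F = {G. \<exists>b. (G, {a..b}) \<in> maximal_groups X eps T tau P m delta}"
  have F_Pow: "F \<subseteq> Pow X"
    unfolding F_def using maximal_groupsD(1) unfolding is_group_def by blast
  moreover have "{} \<notin> F"
    using m maximal_groupsD(1) unfolding F_def is_group_def by fastforce
  moreover have "laminar F"
    unfolding laminar_def
  proof (intro ballI impI)
    fix G1 G2 assume "G1 \<in> F" "G2 \<in> F" "G1 \<inter> G2 \<noteq> {}"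
    moreover obtain b1 b2 where "(G1, {a..b1}) \<in> maximal_groups X eps T tau P m delta"
      "(G2, {a..b2}) \<in> maximal_groups X eps T tau P m delta"
      using \<open>G1 \<in> F\<close> \<open>G2 \<in> F\<close> unfolding F_def by blast
    ultimately show "G1 \<subseteq> G2 \<or> G2 \<subseteq> G1"
      using maximal_groups_same_start_nested[OF fin, of G1 a b1 _ _ _ _ _ _ G2 b2]
        maximal_groups_same_start_nested[OF fin, of G2 a b2 _ _ _ _ _ _ G1 b1]
      by (cases "b1 \<le> b2") (auto simp: Int_commute)
  qed
  ultimately show "finite {G. \<exists>b. (G, {a..b}) \<in> maximal_groups X eps T tau P m delta}"
    and "card {G. \<exists>b. (G, {a..b}) \<in> maximal_groups X eps T tau P m delta} \<le> 2 * card X"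
    using card_laminar_le[OF fin] fin finite_subset[OF F_Pow] unfolding F_def by auto
qed

lemma start_times_finite_card:
  fixes eps :: real and P :: "nat \<Rightarrow> nat \<Rightarrow> point"
  assumes fin: "finite X" and vt: "valid_times T tau"
  defines "S \<equiv> {T 0, T tau} \<union> (\<Union>p\<in>X \<times> X. {t. becomes_conn eps T tau P (fst p) (snd p) t})"
  shows "finite S \<and> card S \<le> 2 + card X * card X * tau"
proof -
  let ?E = "\<lambda>p. {t. becomes_conn eps T tau P (fst p) (snd p) t}"
  have E: "finite (?E p)" "card (?E p) \<le> tau" for p using becomes_conn_finite_card[OF vt] by auto
  have "card S \<le> card {T 0, T tau} + card (\<Union>p\<in>X \<times> X. ?E p)"
    unfolding S_def by (rule card_Un_le)
  also have "\<dots> \<le> 2 + (\<Sum>p\<in>X \<times> X. card (?E p))"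
    using card_UN_le[of "X \<times> X" ?E] fin by (cases "T 0 = T tau") auto
  also have "\<dots> \<le> 2 + (\<Sum>p\<in>X \<times> X. tau)"
    using sum_mono[of "X \<times> X" "\<lambda>p. card (?E p)" "\<lambda>p. tau"] E(2) by simp
  finally show ?thesis using fin E(1) by (simp add: S_def card_cartesian_product)
qed

lemma card_maximal_groups_le:
  assumes fin: "finite X" and tau: "tau \<ge> 1" and vt: "valid_times T tau" and m: "m \<ge> 1"
  shows "finite (maximal_groups X eps T tau P m delta)"
    and "card (maximal_groups X eps T tau P m delta) \<le> 6 * tau * card X ^ 3"
proof -
  let ?MG = "maximal_groups X eps T tau P m delta"
  define S where "S = {T 0, T tau} \<union> (\<Union>p\<in>X \<times> X. {t. becomes_conn eps T tau P (fst p) (snd p) t})"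
  define F where "F a = {G. \<exists>b. (G, {a..b}) \<in> ?MG}" for a
  have S: "finite S" "card S \<le> 2 + card X * card X * tau"
    using start_times_finite_card[OF fin vt] unfolding S_def by auto
  have F: "finite (F a)" "card (F a) \<le> 2 * card X" for a
    using maximal_groups_common_start_finite_card[OF fin m] unfolding F_def by blast+
  define start where "start q = (Inf (snd q), fst q)" for q :: "nat set \<times> real set"
  have start: "start (G, {a..b}) = (a, G)" if "(G, {a..b}) \<in> ?MG" for G a b
    using maximal_group_IccD(1)[OF that] by (simp add: start_def)
  have start_cases: "\<exists>G a b. q = (G, {a..b}) \<and> (G, {a..b}) \<in> ?MG" if mg: "q \<in> ?MG" for q
  proof -
    obtain G I where q: "q = (G, I)" by (cases q)
    obtain a b where "I = {a..b}" using mg maximal_group_interval unfolding q by blast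
    then show ?thesis using q mg by blast
  qed
  have sub: "start ` ?MG \<subseteq> Sigma S F"
  proof (rule image_subsetI)
    fix q assume "q \<in> ?MG"
    then obtain G a b where q: "q = (G, {a..b})" and mg: "(G, {a..b}) \<in> ?MG"
      using start_cases by blast
    have "a \<in> S" using maximal_group_starts_at_event[OF fin m mg] unfolding S_def by force
    then show "start q \<in> Sigma S F" using mg start unfolding q F_def by auto
  qed
  have inj: "inj_on start ?MG"
  proof (rule inj_onI)
    fix q1 q2 assume "q1 \<in> ?MG" "q2 \<in> ?MG" and eq: "start q1 = start q2"
    then obtain G1 a1 b1 G2 a2 b2 where q: "q1 = (G1, {a1..b1})" "q2 = (G2, {a2..b2})"
      and mg: "(G1, {a1..b1}) \<in> ?MG" "(G2, {a2..b2}) \<in> ?MG"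
      using start_cases by meson
    then have "a1 = a2" "G1 = G2" using eq start by auto
    then show "q1 = q2" using maximal_groups_same_start_eq mg unfolding q by blast
  qed
  have fin_Sigma: "finite (Sigma S F)" using S(1) F(1) by auto
  show "finite ?MG" using finite_imageD[OF finite_subset[OF sub fin_Sigma] inj] .
  have "card ?MG \<le> card (Sigma S F)"
    using card_image[OF inj] card_mono[OF fin_Sigma sub] by simp
  also have "\<dots> \<le> card S * (2 * card X)"
    using sum_mono[of S "\<lambda>a. card (F a)" "\<lambda>a. 2 * card X"] F S(1) by (simp add: card_SigmaI)
  also have "\<dots> \<le> (2 + card X * card X * tau) * (2 * card X)" using S(2) by (rule mult_right_mono) simp
  also have "\<dots> \<le> 6 * tau * card X ^ 3"
    using tau by (simp add: algebra_simps power3_eq_cube)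
  finally show "card ?MG \<le> 6 * tau * card X ^ 3" .
qed

section \<open>A configuration with $\Omega(\tau n^3)$ maximal groups\<close>

definition comb_unit :: "nat \<Rightarrow> nat" where
  "comb_unit n = n div 8"

definition comb_period :: "nat \<Rightarrow> real" where
  "comb_period n = 13 * (real n + 1)"

definition comb_times :: "nat \<Rightarrow> nat \<Rightarrow> real" where
  "comb_times n e = real e * comb_period n"

definition comb_stagger :: "nat \<Rightarrow> real" where
  "comb_stagger n = 1 / (2 * real (comb_unit n))"

definition comb_sweep :: "nat \<Rightarrow> nat \<Rightarrow> real \<Rightarrow> real" where
  "comb_sweep n e t = (if even e then t - comb_times n e else comb_times n (Suc e) - t)"

text \<open>Entities below \<open>4 * comb_unit n\<close> are teeth standing \<open>13\<close> apart on the x-axis, the next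
  \<open>2 * comb_unit n\<close> are movers on the line \<open>y = -12\<close> running back and forth with the sweep, and
  the remaining ones are parked far apart. With \<open>eps = 13/2\<close>, a mover touches a tooth iff their
  x-coordinates differ by at most \<open>5\<close>.\<close>

definition comb_pos :: "nat \<Rightarrow> nat \<Rightarrow> real \<Rightarrow> nat \<Rightarrow> point" where
  "comb_pos n e t x =
     (if x < 4 * comb_unit n then vector [13 * real x, 0]
      else if x < 6 * comb_unit n then
        vector [comb_sweep n e t - real (x - 4 * comb_unit n) * (13 + comb_stagger n) - 6, -12]
      else vector [0, 100 * (real x + 1)])"

definition comb_samples :: "nat \<Rightarrow> nat \<Rightarrow> nat \<Rightarrow> point" where
  "comb_samples n x e = comb_pos n e (comb_times n e) x"

definition comb_contact :: "nat \<Rightarrow> nat \<Rightarrow> nat \<Rightarrow> real" where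
  "comb_contact n l q = 13 * real (l + q) + real l * comb_stagger n + 6"

abbreviation comb_conn :: "nat \<Rightarrow> nat \<Rightarrow> nat \<Rightarrow> nat \<Rightarrow> real \<Rightarrow> bool" where
  "comb_conn n tau \<equiv> dconn (13/2) (comb_times n) tau (comb_samples n)"

abbreviation comb_components :: "nat \<Rightarrow> nat \<Rightarrow> real \<Rightarrow> nat set set" where
  "comb_components n tau \<equiv> components {..<n} (13/2) (comb_times n) tau (comb_samples n)"

lemma dist_vec2: "dist (a::real^2) b = sqrt ((a$1 - b$1)^2 + (a$2 - b$2)^2)"
  by (simp add: dist_vec_def L2_set_def sum_2 dist_real_def)

lemma dist_vec2_le_13_iff: "dist (a::real^2) b \<le> 13 \<longleftrightarrow> (a$1 - b$1)^2 + (a$2 - b$2)^2 \<le> 169"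
  unfolding dist_vec2 by (subst real_sqrt_le_iff') auto

lemma abs_vec2_component_le_dist: "\<bar>a$i - b$i\<bar> \<le> dist (a::real^2) b"
  by (metis dist_real_def dist_vec_nth_le)

lemma vec2_eq_iff: "(a::real^2) = b \<longleftrightarrow> a$1 = b$1 \<and> a$2 = b$2"
  by (simp add: vec_eq_iff forall_2)

lemma abs_13_mult_add_gt_5:
  fixes z :: int and v :: real
  assumes "5 < \<bar>v\<bar>" "\<bar>v\<bar> < 8"
  shows "5 < \<bar>13 * real_of_int z + v\<bar>"
proof (cases "z = 0")
  case False
  then have "real_of_int z \<ge> 1 \<or> real_of_int z \<le> -1" by linarith
  then show ?thesis using assms by linarith
qed (use assms in simp)

locale comb =
  fixes n :: nat
  assumes n_ge_16: "16 \<le> n"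
begin

lemma comb_unit_ge_2: "2 \<le> comb_unit n"
  using n_ge_16 unfolding comb_unit_def by simp

lemma comb_unit_le: "6 * comb_unit n \<le> n"
  unfolding comb_unit_def by simp

lemma comb_period_pos: "comb_period n > 0"
  unfolding comb_period_def by simp

lemma comb_stagger_pos: "comb_stagger n > 0"
  using comb_unit_ge_2 unfolding comb_stagger_def by simp

lemma comb_stagger_total_lt_1: "l < 2 * comb_unit n \<Longrightarrow> real l * comb_stagger n < 1"
  using comb_unit_ge_2 unfolding comb_stagger_def by (simp add: field_simps)

lemma comb_times_valid: "valid_times (comb_times n) tau"
  unfolding valid_times_def comb_times_def using comb_period_pos by (simp add: algebra_simps)

lemma comb_times_0 [simp]: "comb_times n 0 = 0"
  by (simp add: comb_times_def)

lemma comb_times_Suc: "comb_times n (Suc e) = comb_times n e + comb_period n"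
  by (simp add: comb_times_def algebra_simps)

lemma comb_traj_static:
  assumes "x < 4 * comb_unit n \<or> 6 * comb_unit n \<le> x"
  shows "traj (comb_times n) tau (comb_samples n x) t = comb_pos n e s x"
  using assms by (intro traj_constant) (auto simp: comb_samples_def comb_pos_def)

lemma comb_traj:
  assumes e: "e < tau" and t: "comb_times n e \<le> t" "t \<le> comb_times n (Suc e)"
  shows "traj (comb_times n) tau (comb_samples n x) t = comb_pos n e t x"
proof (cases "x < 4 * comb_unit n \<or> 6 * comb_unit n \<le> x")
  case True
  then show ?thesis by (rule comb_traj_static)
next
  case False
  have "traj (comb_times n) tau (comb_samples n x) t = comb_samples n x e
      + ((t - comb_times n e) / comb_period n) *\<^sub>R (comb_samples n x (Suc e) - comb_samples n x e)"
    using traj_on_edge[OF comb_times_valid e t] by (simp add: comb_times_Suc)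
  also have "\<dots> = comb_pos n e t x"
    using False comb_period_pos unfolding vec2_eq_iff comb_samples_def comb_pos_def comb_sweep_def
    by (auto simp: comb_times_Suc field_simps)
  finally show ?thesis .
qed

lemma comb_conn_iff:
  assumes e: "e < tau" and t: "comb_times n e \<le> t" "t \<le> comb_times n (Suc e)"
  shows "comb_conn n tau x y t \<longleftrightarrow> dist (comb_pos n e t x) (comb_pos n e t y) \<le> 13"
  unfolding dconn_def comb_traj[OF assms] by simp

lemma comb_teeth_conn:
  assumes "Suc q < 4 * comb_unit n"
  shows "comb_conn n tau q (Suc q) t"
proof -
  have "traj (comb_times n) tau (comb_samples n x) t = comb_pos n 0 0 x" if "x \<le> Suc q" for x
    using assms that by (intro comb_traj_static) simp
  then show ?thesis
    using assms unfolding dconn_def by (simp add: dist_vec2_le_13_iff comb_pos_def algebra_simps)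
qed

lemma comb_mover_tooth_conn_iff:
  assumes e: "e < tau" and t: "comb_times n e \<le> t" "t \<le> comb_times n (Suc e)"
    and l: "l < 2 * comb_unit n" and q: "q < 4 * comb_unit n"
  shows "comb_conn n tau (4 * comb_unit n + l) q t \<longleftrightarrow> \<bar>comb_sweep n e t - comb_contact n l q\<bar> \<le> 5"
proof -
  have "comb_conn n tau (4 * comb_unit n + l) q t \<longleftrightarrow> (comb_sweep n e t - comb_contact n l q)^2 \<le> 5^2"
    unfolding comb_conn_iff[OF e t] dist_vec2_le_13_iff using l q
    by (simp add: comb_pos_def comb_contact_def algebra_simps)
  also have "\<dots> \<longleftrightarrow> \<bar>comb_sweep n e t - comb_contact n l q\<bar> \<le> \<bar>5\<bar>"
    by (rule abs_le_square_iff[symmetric])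
  finally show ?thesis by simp
qed

lemma comb_movers_not_conn:
  assumes e: "e < tau" and t: "comb_times n e \<le> t" "t \<le> comb_times n (Suc e)"
    and l: "l < 2 * comb_unit n" "l' < 2 * comb_unit n" "l \<noteq> l'"
  shows "\<not> comb_conn n tau (4 * comb_unit n + l) (4 * comb_unit n + l') t"
proof
  assume "comb_conn n tau (4 * comb_unit n + l) (4 * comb_unit n + l') t"
  then have "\<bar>comb_pos n e t (4 * comb_unit n + l) $ 1 - comb_pos n e t (4 * comb_unit n + l') $ 1\<bar> \<le> 13"
    using abs_vec2_component_le_dist[of _ 1] order.trans unfolding comb_conn_iff[OF e t] by blast
  then have "\<bar>(real l' - real l) * (13 + comb_stagger n)\<bar> \<le> 13"
    using l by (simp add: comb_pos_def algebra_simps)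
  moreover have "1 \<le> \<bar>real l' - real l\<bar>" using l(3) by (cases "l < l'") auto
  then have "13 + comb_stagger n \<le> \<bar>real l' - real l\<bar> * (13 + comb_stagger n)"
    using mult_right_mono[of 1 "\<bar>real l' - real l\<bar>" "13 + comb_stagger n"] comb_stagger_pos by simp
  ultimately show False using comb_stagger_pos by (simp add: abs_mult)
qed

lemma comb_parked_not_conn:
  assumes e: "e < tau" and t: "comb_times n e \<le> t" "t \<le> comb_times n (Suc e)"
    and x: "6 * comb_unit n \<le> x" and y: "y \<noteq> x"
  shows "\<not> comb_conn n tau x y t"
proof
  assume "comb_conn n tau x y t"
  then have "\<bar>comb_pos n e t x $ 2 - comb_pos n e t y $ 2\<bar> \<le> 13"
    using abs_vec2_component_le_dist[of _ 2] order.trans unfolding comb_conn_iff[OF e t] by blast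
  moreover have "100 \<le> \<bar>comb_pos n e t x $ 2 - comb_pos n e t y $ 2\<bar>"
  proof (cases "6 * comb_unit n \<le> y")
    case True
    have "1 \<le> \<bar>real x - real y\<bar>" using y by (cases "x < y") auto
    then show ?thesis using True x by (simp add: comb_pos_def algebra_simps abs_mult[symmetric])
  qed (use x in \<open>auto simp: comb_pos_def\<close>)
  ultimately show False by simp
qed

text \<open>Away from every contact window by a margin between \<open>5\<close> and \<open>8\<close>, a mover touches no tooth:
  consecutive windows of one mover are \<open>13\<close> apart.\<close>

lemma comb_mover_isolated:
  assumes e: "e < tau" and t: "comb_times n e \<le> t" "t \<le> comb_times n (Suc e)"
    and l: "l < 2 * comb_unit n"
    and gap: "5 < \<bar>comb_sweep n e t - (13 * real R + real l * comb_stagger n + 6)\<bar>"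
      "\<bar>comb_sweep n e t - (13 * real R + real l * comb_stagger n + 6)\<bar> < 8"
    and y: "y \<noteq> 4 * comb_unit n + l"
  shows "\<not> comb_conn n tau (4 * comb_unit n + l) y t"
proof -
  have "y < 4 * comb_unit n \<or> (y = 4 * comb_unit n + (y - 4 * comb_unit n) \<and>
      y - 4 * comb_unit n < 2 * comb_unit n) \<or> 6 * comb_unit n \<le> y"
    by arith
  then consider "y < 4 * comb_unit n" | l' where "y = 4 * comb_unit n + l'" "l' < 2 * comb_unit n"
    | "6 * comb_unit n \<le> y"
    by blast
  then show ?thesis
  proof cases
    case 1
    have "comb_sweep n e t - comb_contact n l y = 13 * real_of_int (int R - int l - int y)
        + (comb_sweep n e t - (13 * real R + real l * comb_stagger n + 6))"
      by (simp add: comb_contact_def algebra_simps)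
    then have "5 < \<bar>comb_sweep n e t - comb_contact n l y\<bar>"
      using abs_13_mult_add_gt_5[OF gap] by presburger
    then show ?thesis using comb_mover_tooth_conn_iff[OF e t l 1] by simp
  next
    case (2 l')
    then show ?thesis using comb_movers_not_conn[OF e t l] y by auto
  next
    case 3
    then show ?thesis using comb_parked_not_conn[OF e t] y dconn_commute by fastforce
  qed
qed

lemma comb_teeth_eps_conn:
  "q < 4 * comb_unit n \<Longrightarrow> eps_conn {..<n} (13/2) (comb_times n) tau (comb_samples n) 0 q t"
proof (induction q)
  case 0
  then show ?case using n_ge_16 by (simp add: eps_conn_def)
next
  case (Suc q)
  then have "Suc q < n" using comb_unit_le by linarith
  then show ?case using Suc comb_teeth_conn[OF Suc.prems] unfolding eps_conn_def
    by (auto intro: rtranclp.rtrancl_into_rtrancl)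
qed

end

definition comb_group :: "nat \<Rightarrow> nat \<Rightarrow> nat \<Rightarrow> nat set" where
  "comb_group n i j = {..<4 * comb_unit n} \<union> {4 * comb_unit n + i..4 * comb_unit n + j}"

text \<open>During this window of an even edge \<open>e\<close>, each mover \<open>l \<in> {i..j}\<close> touches the tooth \<open>r - l\<close>,
  while just before it mover \<open>j\<close> and just after it mover \<open>i\<close> are isolated.\<close>

definition comb_window :: "nat \<Rightarrow> nat \<Rightarrow> nat \<Rightarrow> nat \<Rightarrow> nat \<Rightarrow> real set" where
  "comb_window n e r i j = {comb_times n e + 13 * real r + real j * comb_stagger n + 1 ..
                            comb_times n e + 13 * real r + real i * comb_stagger n + 11}"

locale comb_window_params = comb +
  fixes tau e r i j :: nat
  assumes edge: "e < tau" "even e"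
    and diagonal: "2 * comb_unit n - 1 \<le> r" "r \<le> 4 * comb_unit n - 2"
    and movers: "i \<le> j" "j < 2 * comb_unit n"
begin

definition start :: real where
  "start = comb_times n e + 13 * real r + real j * comb_stagger n + 1"

definition stop :: real where
  "stop = comb_times n e + 13 * real r + real i * comb_stagger n + 11"

lemma comb_window_eq: "comb_window n e r i j = {start..stop}"
  unfolding comb_window_def start_def stop_def ..

lemma start_le_stop: "start \<le> stop"
  using comb_stagger_total_lt_1[of j] comb_stagger_pos movers unfolding start_def stop_def
  by (simp add: add_increasing)

lemma near_window_on_edge:
  assumes "start - 1 \<le> t" "t \<le> stop + 1"
  shows "comb_times n e \<le> t" "t \<le> comb_times n (Suc e)"
proof -
  have "13 * real r \<le> 13 * real n" using diagonal comb_unit_le by simp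
  moreover have "real i * comb_stagger n < 1" using comb_stagger_total_lt_1 movers by simp
  moreover have "0 \<le> real j * comb_stagger n" using comb_stagger_pos by simp
  moreover have "comb_period n = 13 * real n + 13" by (simp add: comb_period_def)
  ultimately show "comb_times n e \<le> t" "t \<le> comb_times n (Suc e)"
    using assms unfolding start_def stop_def comb_times_Suc by linarith+
qed

lemma sweep_eq: "comb_sweep n e t = t - comb_times n e"
  using edge by (simp add: comb_sweep_def)

lemma comb_group_subset: "comb_group n i j \<subseteq> {..<n}"
  using movers comb_unit_le unfolding comb_group_def by auto

lemma zero_in_comb_group: "0 \<in> comb_group n i j"
  using comb_unit_ge_2 unfolding comb_group_def by simp

lemma mover_conn_in_window:
  assumes t: "t \<in> {start..stop}" and l: "i \<le> l" "l \<le> j"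
  shows "comb_conn n tau (4 * comb_unit n + l) (r - l) t"
proof -
  have tooth: "r - l < 4 * comb_unit n" using l movers diagonal comb_unit_ge_2 by linarith
  have "real i * comb_stagger n \<le> real l * comb_stagger n" "real l * comb_stagger n \<le> real j * comb_stagger n"
    using l comb_stagger_pos by (simp_all add: mult_right_mono)
  then have "\<bar>comb_sweep n e t - comb_contact n l (r - l)\<bar> \<le> 5"
    using t l movers diagonal comb_unit_ge_2
    unfolding sweep_eq comb_contact_def start_def stop_def by (auto simp: of_nat_diff)
  moreover have "comb_times n e \<le> t" "t \<le> comb_times n (Suc e)" using near_window_on_edge t by auto
  ultimately show ?thesis using comb_mover_tooth_conn_iff[OF edge(1) _ _ _ tooth] l movers by simp
qed

lemma comb_group_is_group:
  "is_group {..<n} (13/2) (comb_times n) tau (comb_samples n) 1 0 (comb_group n i j) {start..stop}"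
proof -
  have "\<exists>C\<in>comb_components n tau t. comb_group n i j \<subseteq> C" if t: "t \<in> {start..stop}" for t
  proof (rule in_one_componentI[OF zero_in_comb_group comb_group_subset])
    fix g assume g: "g \<in> comb_group n i j"
    show "eps_conn {..<n} (13/2) (comb_times n) tau (comb_samples n) 0 g t"
    proof (cases "g < 4 * comb_unit n")
      case True
      then show ?thesis by (rule comb_teeth_eps_conn)
    next
      case False
      define l where "l = g - 4 * comb_unit n"
      have l: "g = 4 * comb_unit n + l" "i \<le> l" "l \<le> j"
        using False g unfolding l_def comb_group_def by auto
      have tooth: "r - l < 4 * comb_unit n" using l movers diagonal comb_unit_ge_2 by linarith
      have "eps_conn {..<n} (13/2) (comb_times n) tau (comb_samples n) (r - l) g t"
        using mover_conn_in_window[OF t l(2,3)] l g comb_group_subset tooth comb_unit_le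
        by (auto simp: eps_conn_def dconn_commute)
      then show ?thesis using comb_teeth_eps_conn[OF tooth] eps_conn_trans by blast
    qed
  qed
  moreover have "1 \<le> card (comb_group n i j)"
    using zero_in_comb_group comb_group_subset finite_subset[of _ "{..<n}"]
    by (metis One_nat_def Suc_leI card_gt_0_iff empty_iff finite_lessThan)
  moreover have "0 \<le> start"
  proof -
    have "0 \<le> comb_times n e" using comb_period_pos by (simp add: comb_times_def)
    then show ?thesis using near_window_on_edge(1)[of start] start_le_stop by simp
  qed
  moreover have "stop \<le> comb_times n tau"
    using near_window_on_edge(2)[of stop] start_le_stop edge
      valid_times_le[OF comb_times_valid[of tau], of "Suc e" tau] by simp
  ultimately show ?thesis
    using comb_group_subset start_le_stop unfolding is_group_def by auto
qed

lemma mover_isolated: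
  assumes t: "start - 1 \<le> t" "t \<le> stop + 1" and l: "l < 2 * comb_unit n"
    and gap: "5 < \<bar>t - start + 1 + real j * comb_stagger n - real l * comb_stagger n - 6\<bar>"
      "\<bar>t - start + 1 + real j * comb_stagger n - real l * comb_stagger n - 6\<bar> < 8"
    and y: "y \<noteq> 4 * comb_unit n + l"
  shows "\<not> comb_conn n tau (4 * comb_unit n + l) y t"
proof (rule comb_mover_isolated[OF edge(1) near_window_on_edge[OF t] l _ _ y])
  show "5 < \<bar>comb_sweep n e t - (13 * real r + real l * comb_stagger n + 6)\<bar>"
    "\<bar>comb_sweep n e t - (13 * real r + real l * comb_stagger n + 6)\<bar> < 8"
    using gap unfolding sweep_eq start_def by (simp_all add: algebra_simps)
qed

lemma window_cover_eq:
  assumes grp: "is_group {..<n} (13/2) (comb_times n) tau (comb_samples n) m delta H J"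
    and G: "comb_group n i j \<subseteq> H" and I: "{start..stop} \<subseteq> J"
  shows "J = {start..stop}"
proof -
  obtain a b where J: "J = {a..b}" using grp unfolding is_group_def by blast
  have ab: "a \<le> start" "stop \<le> b" using I start_le_stop unfolding J by auto
  have mover: "4 * comb_unit n + l \<in> H" "4 * comb_unit n + l \<noteq> 0" if "i \<le> l" "l \<le> j" for l
    using G that comb_unit_ge_2 unfolding comb_group_def by auto
  have "a = start"
  proof (rule ccontr)
    assume "a \<noteq> start"
    define s where "s = max a (start - 1/2)"
    have s: "s \<in> J" "start - 1/2 \<le> s" "s < start" using \<open>a \<noteq> start\<close> ab start_le_stop
      unfolding s_def J by auto
    show False
      using isolated_not_in_group[OF grp s(1) mover(1)[of j] subsetD[OF G zero_in_comb_group]]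
        mover(2)[of j] mover_isolated[of s j] s start_le_stop movers by fastforce
  qed
  moreover have "b = stop"
  proof (rule ccontr)
    assume "b \<noteq> stop"
    define s where "s = min b (stop + 1/2)"
    have s: "s \<in> J" "s \<le> stop + 1/2" "stop < s" using \<open>b \<noteq> stop\<close> ab start_le_stop
      unfolding s_def J by auto
    have "t - start + 1 + real j * comb_stagger n - real i * comb_stagger n - 6 = t - stop + 5" for t
      unfolding start_def stop_def by simp
    then show False
      using isolated_not_in_group[OF grp s(1) mover(1)[of i] subsetD[OF G zero_in_comb_group]]
        mover(2)[of i] mover_isolated[of s i] s start_le_stop movers by fastforce
  qed
  ultimately show ?thesis using J by simp
qed

lemma group_cover_eq:
  assumes grp: "is_group {..<n} (13/2) (comb_times n) tau (comb_samples n) m delta H {start..stop}"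
    and G: "comb_group n i j \<subseteq> H"
  shows "H = comb_group n i j"
proof (rule ccontr)
  assume "H \<noteq> comb_group n i j"
  then obtain z where z: "z \<in> H" "z \<notin> comb_group n i j" using G by blast
  have in_window: "start \<in> {start..stop}" "stop \<in> {start..stop}" using start_le_stop by auto
  have z0: "z \<noteq> 0" using z(2) zero_in_comb_group by (cases "z = 0") simp_all
  note not_in_group = isolated_not_in_group[OF grp _ z(1) subsetD[OF G zero_in_comb_group] z0[symmetric]]
  have "z < 4 * comb_unit n \<or> 6 * comb_unit n \<le> z \<or>
      (z = 4 * comb_unit n + (z - 4 * comb_unit n) \<and> z - 4 * comb_unit n < 2 * comb_unit n)"
    by arith
  then consider "6 * comb_unit n \<le> z" | l where "z = 4 * comb_unit n + l" "l < i"
    | l where "z = 4 * comb_unit n + l" "j < l" "l < 2 * comb_unit n"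
    using z(2) unfolding comb_group_def by fastforce
  then show False
  proof cases
    case 1
    then show False
      using not_in_group[OF in_window(1)] comb_parked_not_conn[OF edge(1) near_window_on_edge[of start]]
        start_le_stop by auto
  next
    case (2 l)
    have "stop - start + 1 + real j * comb_stagger n - real l * comb_stagger n - 6
        = real i * comb_stagger n - real l * comb_stagger n + 5"
      unfolding start_def stop_def by simp
    moreover have "real l * comb_stagger n < real i * comb_stagger n" "0 \<le> real l * comb_stagger n"
      "real i * comb_stagger n < 1"
      using 2 movers comb_stagger_total_lt_1[of i] comb_stagger_pos by auto
    ultimately show False
      using not_in_group[OF in_window(2)] mover_isolated[of stop l] 2 movers start_le_stop by auto
  next
    case (3 l)
    have "start - start + 1 + real j * comb_stagger n - real l * comb_stagger n - 6
        = real j * comb_stagger n - real l * comb_stagger n - 5"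
      by simp
    moreover have "real j * comb_stagger n < real l * comb_stagger n" "0 \<le> real j * comb_stagger n"
      "real l * comb_stagger n < 1"
      using 3 comb_stagger_total_lt_1[of l] comb_stagger_pos by auto
    ultimately show False
      using not_in_group[OF in_window(1)] mover_isolated[of start l] 3 start_le_stop by auto
  qed
qed

lemma comb_group_maximal:
  "(comb_group n i j, {start..stop}) \<in> maximal_groups {..<n} (13/2) (comb_times n) tau (comb_samples n) 1 0"
  using comb_group_is_group window_cover_eq group_cover_eq unfolding maximal_groups_def by blast

end

lemma comb_group_inj:
  assumes "comb_group n i j = comb_group n i' j'" "i \<le> j" "i' \<le> j'"
  shows "i = i' \<and> j = j'"
proof -
  have mem: "4 * comb_unit n + x \<in> comb_group n a b \<longleftrightarrow> a \<le> x \<and> x \<le> b" for x a b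
    by (auto simp: comb_group_def)
  have "4 * comb_unit n + i \<in> comb_group n i' j'" "4 * comb_unit n + j \<in> comb_group n i' j'"
    "4 * comb_unit n + i' \<in> comb_group n i j" "4 * comb_unit n + j' \<in> comb_group n i j"
    using assms mem by auto
  then show ?thesis using mem by (meson le_antisym)
qed

lemma mult_add_less_inj:
  fixes x x' r r' m :: nat
  assumes "x * m + r = x' * m + r'" "r < m" "r' < m"
  shows "x = x' \<and> r = r'"
proof -
  have "r = r'" using arg_cong[OF assms(1), of "\<lambda>k. k mod m"] assms(2,3) by simp
  then show ?thesis using assms(1,2) by simp
qed

context comb
begin

lemma comb_family_maximal:
  assumes "e < tau" "even e" "2 * comb_unit n - 1 \<le> r" "r \<le> 4 * comb_unit n - 2"
    "i \<le> j" "j < 2 * comb_unit n"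
  shows "(comb_group n i j, comb_window n e r i j)
    \<in> maximal_groups {..<n} (13/2) (comb_times n) tau (comb_samples n) 1 0"
proof -
  interpret comb_window_params n tau e r i j
    using assms by unfold_locales simp_all
  show ?thesis using comb_group_maximal comb_window_eq by simp
qed

lemma comb_window_inj:
  assumes eq: "comb_window n e r i j = comb_window n e' r' i' j"
    and r: "r \<le> n" "r' \<le> n" and j: "j < 2 * comb_unit n" and i: "i \<le> j" "i' \<le> j"
  shows "e = e' \<and> r = r'"
proof -
  have nonempty: "comb_times n e + 13 * real r + real j * comb_stagger n + 1
      \<le> comb_times n e + 13 * real r + real i * comb_stagger n + 11" for e r i
    using comb_stagger_total_lt_1[OF j] comb_stagger_pos by (simp add: add_increasing)
  have "comb_times n e + 13 * real r = comb_times n e' + 13 * real r'"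
    using eq nonempty[of e r i] unfolding comb_window_def by (simp add: Icc_eq_Icc)
  then have "real (e * (n + 1) + r) = real (e' * (n + 1) + r')"
    unfolding comb_times_def comb_period_def by (simp add: algebra_simps)
  then have "e * (n + 1) + r = e' * (n + 1) + r'" by (simp only: of_nat_eq_iff)
  then show ?thesis using mult_add_less_inj[of e "n + 1" r e' r'] r by simp
qed

text \<open>Even edges \<open>2 a\<close>, diagonals \<open>r = 2u - 1 + b\<close> and mover intervals \<open>[c..u + d]\<close> with
  \<open>u = comb_unit n \<ge> n / 16\<close> give \<open>\<lceil>tau/2\<rceil> \<cdot> 2u \<cdot> u\<^sup>2 \<ge> tau n\<^sup>3 / 4096\<close> distinct maximal groups.\<close>

lemma comb_card_maximal_groups_ge:
  assumes tau: "1 \<le> tau"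
  shows "real tau * real n ^ 3 / 4096
    \<le> real (card (maximal_groups {..<n} (13/2) (comb_times n) tau (comb_samples n) 1 0))"
proof -
  let ?MG = "maximal_groups {..<n} (13/2) (comb_times n) tau (comb_samples n) 1 0"
  define u where "u = comb_unit n"
  define A where "A = (tau + 1) div 2"
  define D where "D = {..<A} \<times> {..<2 * u} \<times> {..<u} \<times> {..<u}"
  define f where "f = (\<lambda>(a, b, c, d). (comb_group n c (u + d), comb_window n (2 * a) (2 * u - 1 + b) c (u + d)))"
  have u: "2 \<le> u" "6 * u \<le> n" unfolding u_def using comb_unit_ge_2 comb_unit_le by auto
  have sub: "f ` D \<subseteq> ?MG"
  proof (rule image_subsetI, clarify)
    fix a b c d assume "(a, b, c, d) \<in> D"
    then have "2 * a < tau" "2 * u - 1 \<le> 2 * u - 1 + b" "2 * u - 1 + b \<le> 4 * u - 2" "c \<le> u + d"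
      "u + d < 2 * u"
      using u unfolding D_def A_def by auto
    from comb_family_maximal[OF this(1) _ this(2-5)[unfolded u_def]]
    show "f (a, b, c, d) \<in> ?MG" unfolding f_def u_def by simp
  qed
  have inj: "inj_on f D"
  proof (rule inj_onI)
    fix x y assume "x \<in> D" "y \<in> D" "f x = f y"
    obtain a b c d a' b' c' d' where x: "x = (a, b, c, d)" and y: "y = (a', b', c', d')"
      by (rule prod_cases4[of x], rule prod_cases4[of y]) blast
    have D: "(a, b, c, d) \<in> D" "(a', b', c', d') \<in> D" and eq: "f (a, b, c, d) = f (a', b', c', d')"
      using \<open>x \<in> D\<close> \<open>y \<in> D\<close> \<open>f x = f y\<close> unfolding x y by simp_all
    then have "c = c' \<and> u + d = u + d'"
      using comb_group_inj[of n c "u + d" c' "u + d'"] unfolding f_def D_def by auto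
    moreover have "2 * a = 2 * a' \<and> 2 * u - 1 + b = 2 * u - 1 + b'"
      using eq calculation D u comb_window_inj[of "2 * a" "2 * u - 1 + b" c "u + d" "2 * a'" "2 * u - 1 + b'" c']
      unfolding f_def D_def u_def by auto
    ultimately show "x = y" unfolding x y using u by auto
  qed
  have "finite ?MG"
    using card_maximal_groups_le(1)[OF _ tau comb_times_valid, of "{..<n}" 1] by simp
  then have "card D \<le> card ?MG" using card_image[OF inj] card_mono[OF _ sub] by simp
  moreover have "card D = A * (2 * u * (u * u))" unfolding D_def by (simp add: card_cartesian_product)
  ultimately have "real (A * (2 * u * (u * u))) \<le> real (card ?MG)" by (simp only: of_nat_le_iff)
  then have MG: "real A * (2 * real u * (real u * real u)) \<le> real (card ?MG)" by simp
  have "real tau \<le> 2 * real A" "real n \<le> 16 * real u"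
    unfolding A_def u_def comb_unit_def using n_ge_16 by linarith+
  then have "real tau * real n ^ 3 \<le> (2 * real A) * (16 * real u) ^ 3"
    by (intro mult_mono power_mono) simp_all
  then show ?thesis using MG by (simp add: power3_eq_cube algebra_simps)
qed

lemma comb_event_sweep:
  assumes ev: "event k (13/2) (comb_times n) tau (comb_samples n) (4 * comb_unit n + l) q t"
    and l: "l < 2 * comb_unit n" and q: "q < 4 * comb_unit n"
    and e: "e < tau" "comb_times n e < t" "t \<le> comb_times n (Suc e)"
  shows "comb_sweep n e t = comb_contact n l q + (if k \<longleftrightarrow> even e then -5 else 5)"
proof -
  let ?conn = "\<lambda>s. comb_conn n tau (4 * comb_unit n + l) q s"
  define g where "g s = (if even e then 1 else -1) * (comb_sweep n e s - comb_contact n l q)" for s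
  have g_lin: "g s = g t + (s - t)" for s
    unfolding g_def comb_sweep_def by (simp add: algebra_simps)
  have conn_iff: "?conn s \<longleftrightarrow> \<bar>g s\<bar> \<le> 5" if "comb_times n e \<le> s" "s \<le> comb_times n (Suc e)" for s
    using comb_mover_tooth_conn_iff[OF e(1) that l q] unfolding g_def by (simp add: abs_mult)
  have gt: "\<bar>g t\<bar> \<le> 5" using eventD(3)[OF ev] conn_iff e by simp
  have "6 \<le> comb_contact n l q" using comb_stagger_pos by (simp add: comb_contact_def)
  moreover have "comb_contact n l q + 5 < comb_period n"
    using comb_stagger_total_lt_1[OF l] l q comb_unit_le by (simp add: comb_contact_def comb_period_def)
  ultimately have t_lt: "t < comb_times n (Suc e)"
    using gt e unfolding g_def comb_sweep_def by (auto simp: comb_times_Suc split: if_splits)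
  have near: "?conn s"
    if "comb_times n e \<le> s" "s \<le> comb_times n (Suc e)" "\<bar>g t + (s - t)\<bar> \<le> 5" for s
    using that conn_iff[of s] g_lin[of s] by simp
  have "\<bar>g t\<bar> = 5"
  proof (rule ccontr)
    assume "\<bar>g t\<bar> \<noteq> 5"
    define d where "d = min (5 - \<bar>g t\<bar>) (min (t - comb_times n e) (comb_times n (Suc e) - t))"
    have "d > 0" using gt \<open>\<bar>g t\<bar> \<noteq> 5\<close> e t_lt unfolding d_def by auto
    then obtain s where "\<not> ?conn s" "\<bar>s - t\<bar> < d"
      using eventD(4)[OF ev, of d] by (cases k) (auto simp: abs_less_iff)
    moreover have "\<bar>g t + (s - t)\<bar> \<le> 5"
      using abs_triangle_ineq[of "g t" "s - t"] \<open>\<bar>s - t\<bar> < d\<close> unfolding d_def by linarith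
    ultimately show False using near[of s] \<open>\<bar>s - t\<bar> < d\<close> unfolding d_def by (auto simp: abs_less_iff)
  qed
  moreover have "k" if "g t = -5"
  proof (rule ccontr)
    assume "\<not> k"
    then obtain s where "\<not> ?conn s" "t < s" "s < t + min 10 (comb_times n (Suc e) - t)"
      using eventD(4)[OF ev, of "min 10 (comb_times n (Suc e) - t)"] t_lt by auto
    then show False using near[of s] that e by auto
  qed
  moreover have "\<not> k" if "g t = 5"
  proof
    assume k
    then obtain s where "\<not> ?conn s" "t - min 10 (t - comb_times n e) < s" "s < t"
      using eventD(4)[OF ev, of "min 10 (t - comb_times n e)"] e by auto
    then show False using near[of s] that t_lt by auto
  qed
  ultimately show ?thesis unfolding g_def by (cases "even e"; cases k) (auto simp: abs_if split: if_splits)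
qed

lemma comb_contact_shift_inj:
  assumes l: "l < 2 * comb_unit n" "l' < 2 * comb_unit n"
    and c: "c = 5 \<or> c = -5" "c' = 5 \<or> c' = -5"
    and eq: "comb_contact n l q + c = comb_contact n l' q' + c'"
  shows "l = l' \<and> q = q' \<and> c = c'"
proof -
  define z where "z = int (l + q) - int (l' + q')"
  define w where "w = real l * comb_stagger n - real l' * comb_stagger n"
  have w: "\<bar>w\<bar> < 1"
  proof -
    have "0 \<le> real l * comb_stagger n" "0 \<le> real l' * comb_stagger n" using comb_stagger_pos by simp_all
    then show ?thesis
      using comb_stagger_total_lt_1[OF l(1)] comb_stagger_total_lt_1[OF l(2)]
      unfolding w_def abs_less_iff by linarith
  qed
  have sum: "13 * real_of_int z + w + c - c' = 0"
    using eq unfolding comb_contact_def z_def w_def by (simp add: algebra_simps)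
  have "z = 0"
  proof (rule ccontr)
    assume "z \<noteq> 0"
    then have "real_of_int z \<ge> 1 \<or> real_of_int z \<le> -1" by linarith
    then show False using sum w c by auto
  qed
  then have "c = c'" "w = 0" using sum w c by auto
  then show ?thesis using \<open>z = 0\<close> comb_stagger_pos unfolding z_def w_def by simp
qed

lemma comb_event_pair:
  assumes xy: "x < n" "y < n" "x \<noteq> y" and ev: "event k (13/2) (comb_times n) tau (comb_samples n) x y t"
    and e: "e < tau" "comb_times n e < t" "t \<le> comb_times n (Suc e)"
  obtains l q where "l < 2 * comb_unit n" "q < 4 * comb_unit n" "{x, y} = {4 * comb_unit n + l, q}"
    "event k (13/2) (comb_times n) tau (comb_samples n) (4 * comb_unit n + l) q t"
proof -
  have on_edge: "comb_times n e \<le> t" "t \<le> comb_times n (Suc e)" using e by auto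
  have conn: "comb_conn n tau x y t" using eventD(3)[OF ev] .
  have not_teeth: "\<not> (x < 4 * comb_unit n \<and> y < 4 * comb_unit n)"
  proof
    assume teeth: "x < 4 * comb_unit n \<and> y < 4 * comb_unit n"
    then have "comb_conn n tau x y s = comb_conn n tau x y t" for s
      using comb_traj_static[of x tau _ 0 0] comb_traj_static[of y tau _ 0 0] unfolding dconn_def by simp
    then show False using eventD(4)[OF ev, of 1] conn by auto
  qed
  have not_parked: "x < 6 * comb_unit n" "y < 6 * comb_unit n"
    using conn comb_parked_not_conn[OF e(1) on_edge, of x y] comb_parked_not_conn[OF e(1) on_edge, of y x]
      xy(3) dconn_commute by force+
  have not_movers: "\<not> (4 * comb_unit n \<le> x \<and> 4 * comb_unit n \<le> y)"
  proof
    assume movers: "4 * comb_unit n \<le> x \<and> 4 * comb_unit n \<le> y"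
    have "\<not> comb_conn n tau (4 * comb_unit n + (x - 4 * comb_unit n)) (4 * comb_unit n + (y - 4 * comb_unit n)) t"
      by (rule comb_movers_not_conn[OF e(1) on_edge]) (use movers not_parked xy(3) in auto)
    then show False using conn movers by (simp add: le_add_diff_inverse)
  qed
  show ?thesis
  proof (cases "x < 4 * comb_unit n")
    case True
    then have "4 * comb_unit n \<le> y" using not_teeth by simp
    then show ?thesis
      using that[of "y - 4 * comb_unit n" x] True not_parked ev event_commute by (simp add: insert_commute)
  next
    case False
    then have "y < 4 * comb_unit n" using not_movers by simp
    then show ?thesis using that[of "x - 4 * comb_unit n" y] False not_parked ev by simp
  qed
qed

text \<open>The time of an event determines the mover, the tooth and the kind
  of the event.\<close>

lemma comb_general_position: "general_position {..<n} (13/2) (comb_times n) tau (comb_samples n)"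
  unfolding general_position_def
proof (intro allI impI)
  fix k k' x y x' y' t
  assume xy: "x \<in> {..<n}" "y \<in> {..<n}" "x \<noteq> y" and xy': "x' \<in> {..<n}" "y' \<in> {..<n}" "x' \<noteq> y'"
    and ev: "event k (13/2) (comb_times n) tau (comb_samples n) x y t"
    and ev': "event k' (13/2) (comb_times n) tau (comb_samples n) x' y' t"
  obtain e where e: "e < tau" "comb_times n e < t" "t \<le> comb_times n (Suc e)"
    using edge_containing[OF comb_times_valid eventD(1)[OF ev] less_imp_le[OF eventD(2)[OF ev]]]
    by blast
  obtain l q where lq: "l < 2 * comb_unit n" "q < 4 * comb_unit n" "{x, y} = {4 * comb_unit n + l, q}"
    and evs: "event k (13/2) (comb_times n) tau (comb_samples n) (4 * comb_unit n + l) q t"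
    using xy by (auto intro: comb_event_pair[OF _ _ _ ev e])
  obtain l' q' where lq': "l' < 2 * comb_unit n" "q' < 4 * comb_unit n" "{x', y'} = {4 * comb_unit n + l', q'}"
    and evs': "event k' (13/2) (comb_times n) tau (comb_samples n) (4 * comb_unit n + l') q' t"
    using xy' by (auto intro: comb_event_pair[OF _ _ _ ev' e])
  then have "comb_contact n l q + (if k \<longleftrightarrow> even e then -5 else 5)
      = comb_contact n l' q' + (if k' \<longleftrightarrow> even e then -5 else 5)"
    using comb_event_sweep[OF evs lq(1,2) e] comb_event_sweep[OF evs' lq'(1,2) e] by simp
  then have "l = l' \<and> q = q' \<and>
      (if k \<longleftrightarrow> even e then -5 else 5) = (if k' \<longleftrightarrow> even e then -5 else (5::real))"
    by (intro comb_contact_shift_inj[OF lq(1) lq'(1)]) simp_all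
  then show "k = k' \<and> {x, y} = {x', y'}" using lq lq' by (auto split: if_splits)
qed

end

theorem theorem4:
  shows "(\<exists>c::real. \<forall>(X::nat set) (T::nat \<Rightarrow> real) (tau::nat) (P::nat \<Rightarrow> nat \<Rightarrow> point)
            (eps::real) (m::nat) (delta::real).
            finite X \<longrightarrow> tau \<ge> 1 \<longrightarrow> valid_times T tau \<longrightarrow>
            eps \<ge> 0 \<longrightarrow> m \<ge> 1 \<longrightarrow> delta \<ge> 0 \<longrightarrow> general_position X eps T tau P \<longrightarrow>
            finite (maximal_groups X eps T tau P m delta) \<and>
            real (card (maximal_groups X eps T tau P m delta))
              \<le> c * real tau * real (card X) ^ 3)
      \<and> (\<exists>c::real. c > 0 \<and> (\<exists>N::nat. \<forall>n tau. n \<ge> N \<longrightarrow> tau \<ge> N \<longrightarrow>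
            (\<exists>(X::nat set) (T::nat \<Rightarrow> real) (P::nat \<Rightarrow> nat \<Rightarrow> point)
               (eps::real) (m::nat) (delta::real).
               finite X \<and> card X = n \<and> tau \<ge> 1 \<and> valid_times T tau \<and>
               eps \<ge> 0 \<and> m \<ge> 1 \<and> delta \<ge> 0 \<and> general_position X eps T tau P \<and>
               real (card (maximal_groups X eps T tau P m delta))
                 \<ge> c * real tau * real n ^ 3)))"
proof (intro conjI)
  show "\<exists>c::real. \<forall>X T tau P eps m delta. finite X \<longrightarrow> tau \<ge> 1 \<longrightarrow> valid_times T tau \<longrightarrow>
      eps \<ge> 0 \<longrightarrow> m \<ge> 1 \<longrightarrow> delta \<ge> 0 \<longrightarrow> general_position X eps T tau P \<longrightarrow>
      finite (maximal_groups X eps T tau P m delta) \<and>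
      real (card (maximal_groups X eps T tau P m delta)) \<le> c * real tau * real (card X) ^ 3"
  proof (intro exI[of _ 6] allI impI)
    fix X :: "nat set" and T :: "nat \<Rightarrow> real" and tau :: nat and P :: "nat \<Rightarrow> nat \<Rightarrow> point"
      and eps :: real and m :: nat and delta :: real
    assume "finite X" "tau \<ge> 1" "valid_times T tau" "m \<ge> 1"
    note bound = card_maximal_groups_le[OF this, of eps P delta]
    then have "real (card (maximal_groups X eps T tau P m delta)) \<le> real (6 * tau * card X ^ 3)"
      by (simp only: of_nat_le_iff)
    then show "finite (maximal_groups X eps T tau P m delta) \<and>
        real (card (maximal_groups X eps T tau P m delta)) \<le> 6 * real tau * real (card X) ^ 3"
      using bound by simp
  qed
  show "\<exists>c::real. c > 0 \<and> (\<exists>N. \<forall>n tau. n \<ge> N \<longrightarrow> tau \<ge> N \<longrightarrow>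
      (\<exists>X T P eps m delta. finite X \<and> card X = n \<and> tau \<ge> 1 \<and> valid_times T tau \<and>
         eps \<ge> 0 \<and> m \<ge> 1 \<and> delta \<ge> 0 \<and> general_position X eps T tau P \<and>
         real (card (maximal_groups X eps T tau P m delta)) \<ge> c * real tau * real n ^ 3))"
  proof (intro exI[of _ "1/4096"] conjI exI[of _ 16] allI impI)
    fix n tau :: nat
    assume "16 \<le> n" "16 \<le> tau"
    then interpret comb n by unfold_locales
    show "\<exists>X T P eps m delta. finite X \<and> card X = n \<and> tau \<ge> 1 \<and> valid_times T tau \<and>
        eps \<ge> 0 \<and> m \<ge> 1 \<and> delta \<ge> 0 \<and> general_position X eps T tau P \<and>
        real (card (maximal_groups X eps T tau P m delta)) \<ge> 1/4096 * real tau * real n ^ 3"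
      using \<open>16 \<le> tau\<close> comb_times_valid comb_general_position comb_card_maximal_groups_ge[of tau]
      by (intro exI[of _ "{..<n}"] exI[of _ "comb_times n"] exI[of _ "comb_samples n"]
          exI[of _ "13/2"] exI[of _ 1] exI[of _ 0]) simp
  qed simp
qed

end
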